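(* In the deductive system $NOM$, for all finite sequences of formulas $\Gamma$ and all formulas $\phi,\psi$, the following two rules of inference are derivable: from $\Gamma \vdash \phi \rightarrow \psi$ infer $\Gamma \vdash \neg(\phi \wedge \neg(\phi \wedge \psi))$; and from $\Gamma \vdash \neg(\phi \wedge \neg(\phi \wedge \psi))$ infer $\Gamma \vdash \phi \rightarrow \psi$.
   Context: The propositional deductive system $NOM$: formulas are built from propositional letters using the binary connectives $\wedge$, $\rightarrow$ and the unary connective $\neg$. A sequent is an expression $\phi_1,\ldots,\phi_n \vdash \psi$ with $n\ge 0$, whose antecedent is a finite sequence (order matters, repetitions allowed) of formulas. Below $\Gamma$ denotes a finite, possibly empty, sequence of formulas, $\phi,\psi,\chi$ formulas, and commas denote concatenation. A sequent is derivable in $NOM$ if it can be obtained with the following rules (premises $\Rightarrow$ conclusion): (assumption) $\Gamma,\phi\vdash\phi$, no premises; (cut) $\Gamma\vdash\phi$ and $\Gamma,\phi\vdash\psi$ $\Rightarrow$ $\Gamma\vdash\psi$; (paste) $\Gamma\vdash\phi$ and $\Gamma\vdash\psi$ $\Rightarrow$ $\Gamma,\phi\vdash\psi$; (compatible exchange) $\Gamma,\phi,\psi\vdash\phi$ and $\Gamma,\phi,\psi\vdash\chi$ and $\Gamma,\psi,\phi\vdash\psi$ $\Rightarrow$ $\Gamma,\psi,\phi\vdash\chi$; ($\wedge$-introduction) $\Gamma\vdash\phi$ and $\Gamma\vdash\psi$ $\Rightarrow$ $\Gamma\vdash\phi\wedge\psi$; ($\wedge$-elimination) $\Gamma\vdash\phi\wedge\psi$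 $\Rightarrow$ $\Gamma\vdash\phi$, and $\Gamma\vdash\phi\wedge\psi$ $\Rightarrow$ $\Gamma\vdash\psi$; ($\rightarrow$-introduction) $\Gamma,\phi\vdash\psi$ $\Rightarrow$ $\Gamma\vdash\phi\rightarrow\psi$; ($\rightarrow$-elimination) $\Gamma\vdash\phi\rightarrow\psi$ $\Rightarrow$ $\Gamma,\phi\vdash\psi$; (excluded middle) $\Gamma,\phi\vdash\psi$ and $\Gamma,\neg\phi\vdash\psi$ $\Rightarrow$ $\Gamma\vdash\psi$; (deductive explosion) $\Gamma\vdash\neg\phi$ $\Rightarrow$ $\Gamma,\phi\vdash\psi$. A rule schema is derivable if in every instance its conclusion can be derived from its premises using these rules. *)

theory Defs
  imports Main
begin

datatype 'a form = Letter 'a | Conj "'a form" "'a form" | Imp "'a form" "'a form" | Neg "'a form"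

text \<open>A sequent: antecedent (finite sequence, order and repetitions matter) and succedent.\<close>
type_synonym 'a sequent = "'a form list \<times> 'a form"

text \<open>A rule schema is derivable iff for every instance, the
  conclusion is derivable from the set of its premises.\<close>
inductive derivable :: "'a sequent set \<Rightarrow> 'a sequent \<Rightarrow> bool" for H where
  premise: "s \<in> H \<Longrightarrow> derivable H s"
| assumption: "derivable H (\<Gamma> @ [\<phi>], \<phi>)"
| cut: "derivable H (\<Gamma>, \<phi>) \<Longrightarrow> derivable H (\<Gamma> @ [\<phi>], \<psi>) \<Longrightarrow> derivable H (\<Gamma>, \<psi>)"
| paste: "derivable H (\<Gamma>, \<phi>) \<Longrightarrow> derivable H (\<Gamma>, \<psi>) \<Longrightarrow> derivable H (\<Gamma> @ [\<phi>], \<psi>)"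
| compat_exchange: "derivable H (\<Gamma> @ [\<phi>, \<psi>], \<phi>) \<Longrightarrow> derivable H (\<Gamma> @ [\<phi>, \<psi>], \<chi>)
    \<Longrightarrow> derivable H (\<Gamma> @ [\<psi>, \<phi>], \<psi>) \<Longrightarrow> derivable H (\<Gamma> @ [\<psi>, \<phi>], \<chi>)"
| conjI: "derivable H (\<Gamma>, \<phi>) \<Longrightarrow> derivable H (\<Gamma>, \<psi>) \<Longrightarrow> derivable H (\<Gamma>, Conj \<phi> \<psi>)"
| conjE1: "derivable H (\<Gamma>, Conj \<phi> \<psi>) \<Longrightarrow> derivable H (\<Gamma>, \<phi>)"
| conjE2: "derivable H (\<Gamma>, Conj \<phi> \<psi>) \<Longrightarrow> derivable H (\<Gamma>, \<psi>)"
| impI: "derivable H (\<Gamma> @ [\<phi>], \<psi>) \<Longrightarrow> derivable H (\<Gamma>, Imp \<phi> \<psi>)"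
| impE: "derivable H (\<Gamma>, Imp \<phi> \<psi>) \<Longrightarrow> derivable H (\<Gamma> @ [\<phi>], \<psi>)"
| excluded_middle: "derivable H (\<Gamma> @ [\<phi>], \<psi>) \<Longrightarrow> derivable H (\<Gamma> @ [Neg \<phi>], \<psi>) \<Longrightarrow> derivable H (\<Gamma>, \<psi>)"
| explosion: "derivable H (\<Gamma>, Neg \<phi>) \<Longrightarrow> derivable H (\<Gamma> @ [\<phi>], \<psi>)"

end

theory Submission
  imports Defs
begin

text \<open>NOM has neither weakening nor unrestricted exchange: a hypothesis can only be added
  by paste (when it is itself derivable) and two hypotheses can only be swapped under the side
  conditions of compatible exchange. Both directions are therefore proved by reasoning about
  inconsistent contexts, those from which every formula is derivable. For them these side
  conditions are easy to meet: an inconsistent context stays inconsistent when extended, and two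
  hypotheses may be swapped as soon as the one moved to the end is re-derivable. A formula is
  refuted by showing that adding it makes the context inconsistent; for the converse direction
  excluded middle on \<open>Conj \<phi> \<psi>\<close> reduces everything to such refutations.\<close>

definition inconsistent :: "'a sequent set \<Rightarrow> 'a form list \<Rightarrow> bool" where
  "inconsistent H \<Gamma> \<longleftrightarrow> (\<forall>\<chi>. derivable H (\<Gamma>, \<chi>))"

lemma derivable_Neg_NegD: "derivable H (\<Gamma> @ [Neg (Neg \<phi>)], \<phi>)"
proof (rule derivable.excluded_middle)
  show "derivable H ((\<Gamma> @ [Neg (Neg \<phi>)]) @ [\<phi>], \<phi>)"
    by (rule derivable.assumption)
  show "derivable H ((\<Gamma> @ [Neg (Neg \<phi>)]) @ [Neg \<phi>], \<phi>)"
    by (intro derivable.explosion derivable.assumption)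
qed

text \<open>Stated as an implication because excluded middle on \<open>Neg \<phi>\<close> cannot turn
  \<open>\<Gamma> \<turnstile> \<phi>\<close> into \<open>\<Gamma> \<turnstile> Neg (Neg \<phi>)\<close> directly: in the case \<open>Neg \<phi>\<close> the
  premise \<open>\<Gamma> \<turnstile> \<phi>\<close> would have to be weakened past the new hypothesis.\<close>
lemma derivable_Imp_Neg_Neg: "derivable H (\<Gamma>, Imp \<phi> (Neg (Neg \<phi>)))"
proof (rule derivable.excluded_middle)
  show "derivable H (\<Gamma> @ [Neg \<phi>], Imp \<phi> (Neg (Neg \<phi>)))"
    by (intro derivable.impI derivable.explosion derivable.assumption)
  show "derivable H (\<Gamma> @ [Neg (Neg \<phi>)], Imp \<phi> (Neg (Neg \<phi>)))"
    by (intro derivable.impI derivable.paste derivable_Neg_NegD derivable.assumption)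
qed

lemma derivable_Neg_NegI: "derivable H (\<Gamma>, \<phi>) \<Longrightarrow> derivable H (\<Gamma>, Neg (Neg \<phi>))"
  using derivable.cut derivable.impE derivable_Imp_Neg_Neg by blast

lemma inconsistent_snocI: "derivable H (\<Gamma>, Neg \<phi>) \<Longrightarrow> inconsistent H (\<Gamma> @ [\<phi>])"
  unfolding inconsistent_def using derivable.explosion by blast

lemma inconsistent_snoc_Neg: "derivable H (\<Gamma>, \<phi>) \<Longrightarrow> inconsistent H (\<Gamma> @ [Neg \<phi>])"
  using inconsistent_snocI derivable_Neg_NegI by blast

lemma derivable_NegI: "inconsistent H (\<Gamma> @ [\<phi>]) \<Longrightarrow> derivable H (\<Gamma>, Neg \<phi>)"
  unfolding inconsistent_def using derivable.excluded_middle derivable.assumption by blast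

lemma inconsistent_snoc: "inconsistent H \<Gamma> \<Longrightarrow> inconsistent H (\<Gamma> @ [\<phi>])"
  using inconsistent_snocI inconsistent_def by blast

lemma inconsistent_swap:
  assumes "inconsistent H (\<Gamma> @ [\<phi>, \<psi>])" and "derivable H (\<Gamma> @ [\<psi>, \<phi>], \<psi>)"
  shows "inconsistent H (\<Gamma> @ [\<psi>, \<phi>])"
  using assms derivable.compat_exchange unfolding inconsistent_def by blast

lemma inconsistent_weaken:
  assumes "inconsistent H (\<Gamma> @ [\<psi>])" and "derivable H (\<Gamma> @ [\<phi>, \<psi>], \<phi>)"
  shows "inconsistent H (\<Gamma> @ [\<phi>, \<psi>])"
  using inconsistent_swap[OF _ assms(2)] inconsistent_snoc[OF assms(1)] by simp

lemma inconsistent_discharge: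
  assumes "inconsistent H (\<Gamma> @ [\<phi>, \<psi>])" and "derivable H (\<Gamma> @ [\<psi>], \<phi>)"
  shows "inconsistent H (\<Gamma> @ [\<psi>])"
proof -
  have "derivable H (\<Gamma> @ [\<psi>, \<phi>], \<psi>)"
    using derivable.paste[OF assms(2) derivable.assumption] by simp
  then have "inconsistent H ((\<Gamma> @ [\<psi>]) @ [\<phi>])"
    using inconsistent_swap[OF assms(1)] by simp
  then show ?thesis
    using derivable.cut[OF assms(2)] unfolding inconsistent_def by blast
qed

lemma derivable_Neg_Conj_Neg_Conj_if_Imp:
  assumes "derivable H (\<Gamma>, Imp \<phi> \<psi>)"
  shows "derivable H (\<Gamma>, Neg (Conj \<phi> (Neg (Conj \<phi> \<psi>))))"
proof -
  let ?C = "Conj \<phi> \<psi>"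
  let ?A = "Conj \<phi> (Neg ?C)"
  have "derivable H (\<Gamma> @ [\<phi>], ?C)"
    using derivable.conjI[OF derivable.assumption derivable.impE[OF assms]] .
  from inconsistent_snoc[OF inconsistent_snoc_Neg[OF this]]
  have "inconsistent H (\<Gamma> @ [\<phi>, Neg ?C, ?A])"
    by simp
  moreover have "derivable H (\<Gamma> @ [\<phi>, ?A], Neg ?C)"
    using derivable.conjE2[OF derivable.assumption[of H "\<Gamma> @ [\<phi>]"]] by simp
  ultimately have "inconsistent H (\<Gamma> @ [\<phi>, ?A])"
    using inconsistent_discharge[of H "\<Gamma> @ [\<phi>]"] by simp
  moreover have "derivable H (\<Gamma> @ [?A], \<phi>)"
    by (rule derivable.conjE1[OF derivable.assumption])
  ultimately have "inconsistent H (\<Gamma> @ [?A])"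
    by (rule inconsistent_discharge)
  then show ?thesis
    by (rule derivable_NegI)
qed

lemma derivable_Imp_if_Neg_Conj_Neg_Conj:
  assumes "derivable H (\<Gamma>, Neg (Conj \<phi> (Neg (Conj \<phi> \<psi>))))"
  shows "derivable H (\<Gamma>, Imp \<phi> \<psi>)"
proof (rule derivable.excluded_middle)
  let ?C = "Conj \<phi> \<psi>"
  let ?A = "Conj \<phi> (Neg ?C)"
  have "derivable H (\<Gamma> @ [?C], \<phi>)" and "derivable H (\<Gamma> @ [?C], \<psi>)"
    by (rule derivable.conjE1[OF derivable.assumption], rule derivable.conjE2[OF derivable.assumption])
  then show "derivable H (\<Gamma> @ [?C], Imp \<phi> \<psi>)"
    by (rule derivable.impI[OF derivable.paste])
  let ?\<Delta> = "\<Gamma> @ [Neg ?C, \<phi>]"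
  have "inconsistent H (\<Gamma> @ [Neg ?C, ?A])"
    using inconsistent_weaken[OF inconsistent_snocI[OF assms]]
      derivable.conjE2[OF derivable.assumption[of H "\<Gamma> @ [Neg ?C]"]] by simp
  moreover have "derivable H (?\<Delta> @ [?A], \<phi>)"
    by (rule derivable.conjE1[OF derivable.assumption])
  ultimately have "inconsistent H (?\<Delta> @ [?A])"
    using inconsistent_weaken[of H "\<Gamma> @ [Neg ?C]"] by simp
  moreover have "derivable H (?\<Delta>, ?A)"
  proof -
    have "inconsistent H (\<Gamma> @ [Neg ?C, ?C])"
      using inconsistent_snocI[OF derivable.assumption] by simp
    moreover have "derivable H (?\<Delta> @ [?C], \<phi>)"
      by (rule derivable.conjE1[OF derivable.assumption])
    ultimately have "inconsistent H (?\<Delta> @ [?C])"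
      using inconsistent_weaken[of H "\<Gamma> @ [Neg ?C]"] by simp
    then have "derivable H (?\<Delta>, Neg ?C)"
      by (rule derivable_NegI)
    then show ?thesis
      using derivable.conjI[OF derivable.assumption[of H "\<Gamma> @ [Neg ?C]" \<phi>]] by simp
  qed
  ultimately have "derivable H (?\<Delta>, \<psi>)"
    unfolding inconsistent_def by (blast intro: derivable.cut)
  then show "derivable H (\<Gamma> @ [Neg ?C], Imp \<phi> \<psi>)"
    using derivable.impI[of H "\<Gamma> @ [Neg ?C]"] by simp
qed

theorem theorem2p10:
  fixes \<Gamma> :: "'a form list" and \<phi> \<psi> :: "'a form"
  shows "derivable {(\<Gamma>, Imp \<phi> \<psi>)} (\<Gamma>, Neg (Conj \<phi> (Neg (Conj \<phi> \<psi>))))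
       \<and> derivable {(\<Gamma>, Neg (Conj \<phi> (Neg (Conj \<phi> \<psi>))))} (\<Gamma>, Imp \<phi> \<psi>)"
  using derivable_Neg_Conj_Neg_Conj_if_Imp[OF derivable.premise]
    derivable_Imp_if_Neg_Conj_Neg_Conj[OF derivable.premise] by blast

end
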